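(* Let $q$ be odd. For every $c\in{\mathbb F}_q$, $$\prod\Big\{c-a: a\in{\mathbb F}_q,\ \left(\tfrac{a(a+4)}{q}\right)=1\Big\}+\prod\Big\{c-b: b\in{\mathbb F}_q,\ \left(\tfrac{b(b+4)}{q}\right)=-1\Big\}=\left(\frac{c}{q}\right).$$
   Context: $\left(\frac{a}{q}\right)$ denotes the Legendre symbol on ${\mathbb F}_q$: $1$ if $a$ is a nonzero square, $-1$ if a nonsquare, $0$ if $a=0$. Empty products equal $1$. *)

theory Defs
  imports Main
begin

definition legendre_ff :: "'a::{finite,field} \<Rightarrow> int" where
  "legendre_ff a = (if a = 0 then 0 else if (\<exists>b. b ^ 2 = a) then 1 else -1)"

end

theory Submission
  imports "HOL-Computational_Algebra.Polynomial" "HOL-Library.Cardinality" Defs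
begin

text \<open>
  Let \<open>m = (q - 1) / 2\<close>. By Euler's criterion the Legendre symbol \<open>\<chi>(x)\<close> is \<open>x ^ m\<close>, and the
  sets \<open>R\<^sub>\<plusminus> = {w. w ^ m = \<plusminus>1}\<close> are the full root sets of \<open>X ^ m \<mp> 1\<close>, each of size \<open>m\<close>.
  Since \<open>a (a + 4) = a\<^sup>2 \<cdot> (1 + 4 / a)\<close>, the substitution \<open>w = 1 + 4 / a\<close> maps
  \<open>{a. \<chi>(a (a + 4)) = \<plusminus>1}\<close> bijectively onto \<open>R\<^sub>\<plusminus> - {1}\<close>, turning the two products into
  \<open>\<Prod>(c w - (c + 4)) / \<Prod>(w - 1)\<close> over these root sets. The numerators are values of
  \<open>X ^ m \<mp> 1\<close>; the denominators follow from Wilson's theorem. The products come out as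
  \<open>(c ^ m \<mp> (c + 4) ^ m) / 2\<close>, whose sum is \<open>c ^ m = \<chi>(c)\<close>.
\<close>

lemma of_nat_card_UNIV_field [simp]: "of_nat CARD('a) = (0::'a::{finite,field})"
proof -
  have "(\<Sum>x\<in>(UNIV::'a set). x) = (\<Sum>x\<in>UNIV. x + 1)"
    by (rule sum.reindex_bij_witness[of _ "\<lambda>x. x + 1" "\<lambda>x. x - 1"]) auto
  then show ?thesis by (simp add: sum.distrib)
qed

lemma power_card_minus_one_field:
  fixes x :: "'a::{finite,field}"
  assumes "x \<noteq> 0"
  shows "x ^ (CARD('a) - 1) = 1"
proof -
  let ?U = "UNIV - {0::'a}"
  have "(\<Prod>y\<in>?U. x * y) = (\<Prod>y\<in>?U. y)"
    by (rule prod.reindex_bij_witness[of _ "\<lambda>y. y / x" "\<lambda>y. x * y"]) (use assms in auto)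
  moreover have "(\<Prod>y\<in>?U. x * y) = x ^ card ?U * (\<Prod>y\<in>?U. y)"
    by (simp add: prod.distrib)
  moreover have "card ?U = CARD('a) - 1"
    by (simp add: card_Diff_singleton)
  ultimately show ?thesis by simp
qed

lemma card_le_twice_card_image:
  assumes "finite A" "\<And>x. x \<in> A \<Longrightarrow> card {y\<in>A. f y = f x} \<le> 2"
  shows "card A \<le> 2 * card (f ` A)"
proof -
  have "A = (\<Union>z\<in>f ` A. {y\<in>A. f y = z})" by auto
  then have "card A \<le> (\<Sum>z\<in>f ` A. card {y\<in>A. f y = z})"
    by (metis card_UN_le assms(1) finite_imageI)
  also have "\<dots> \<le> (\<Sum>z\<in>f ` A. 2)"
    by (rule sum_mono) (use assms(2) in auto)
  finally show ?thesis by (simp add: mult.commute)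
qed

lemma prod_linear_factors_eq_monic:
  fixes A :: "'a::field set" and p :: "'a poly"
  assumes "finite A" "card A = degree p" "lead_coeff p = 1"
    and "\<And>a. a \<in> A \<Longrightarrow> poly p a = 0"
  shows "(\<Prod>a\<in>A. [:-a, 1:]) = p"
proof (rule poly_eqI_degree_lead_coeff[where n = "card A" and A = A])
  have deg: "degree (\<Prod>a\<in>A. [:-a, 1:]) = card A"
    by (subst degree_prod_eq_sum_degree) auto
  then show "degree (\<Prod>a\<in>A. [:-a, 1:]) \<le> card A" by simp
  show "coeff (\<Prod>a\<in>A. [:-a, 1:]) (card A) = coeff p (card A)"
    using deg assms(2,3) lead_coeff_prod[of "\<lambda>a. [:-a, 1:]" A] by simp
  show "degree p \<le> card A" using assms(2) by simp
  fix z assume "z \<in> A"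
  then show "poly (\<Prod>a\<in>A. [:-a, 1:]) z = poly p z"
    using assms(1,4) by (auto simp: poly_prod prod_zero_iff)
qed simp

lemma degree_monom_plus_const:
  fixes t :: "'a::field"
  assumes "m \<ge> 1"
  shows "degree (monom 1 m + [:-t:]) = m" "lead_coeff (monom 1 m + [:-t:]) = 1"
proof -
  show deg: "degree (monom 1 m + [:-t:]) = m"
    using assms by (subst degree_add_eq_left) (auto simp: degree_monom_eq)
  show "lead_coeff (monom 1 m + [:-t:]) = 1"
    using assms by (simp add: deg) (cases m; simp)
qed

lemma card_roots_of_power_le:
  fixes t :: "'a::{finite,field}"
  assumes "m \<ge> 1"
  shows "card {w. w ^ m = t} \<le> m"
proof -
  have "{w. w ^ m = t} = {w. poly (monom 1 m + [:-t:]) w = 0}"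
    by (simp add: poly_monom)
  moreover have "monom 1 m + [:-t:] \<noteq> 0"
    using degree_monom_plus_const[OF assms, of t] assms by auto
  ultimately show ?thesis
    using card_poly_roots_bound degree_monom_plus_const(1)[OF assms, of t] by metis
qed

lemma prod_diff_roots_of_power:
  fixes t :: "'a::{finite,field}"
  assumes "m \<ge> 1" "card {w. w ^ m = t} = m"
  shows "(\<Prod>w\<in>{w. w ^ m = t}. d - w) = d ^ m - t"
proof -
  have "(\<Prod>w\<in>{w. w ^ m = t}. [:-w, 1:]) = monom 1 m + [:-t:]"
    using degree_monom_plus_const[OF assms(1), of t] assms(2)
    by (intro prod_linear_factors_eq_monic) (simp_all add: poly_monom)
  from arg_cong[OF this, of "\<lambda>p. poly p d"] show ?thesis
    by (simp add: poly_prod poly_monom)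
qed

lemma prod_mult_diff_of_prod_diff:
  fixes A :: "'a::field set"
  assumes "card A = m" "m \<ge> 1" "\<And>d. (\<Prod>a\<in>A. d - a) = d ^ m - t"
  shows "(\<Prod>a\<in>A. c * a - e) = (-1) ^ m * (e ^ m - t * c ^ m)"
proof (cases "c = 0")
  case True
  then show ?thesis
    using assms(1,2) power_minus[of e m] by (simp add: power_0_left)
next
  case False
  then have "\<And>a. c * a - e = (-c) * (e / c - a)"
    by (simp add: algebra_simps)
  then have "(\<Prod>a\<in>A. c * a - e) = (-c) ^ m * (\<Prod>a\<in>A. e / c - a)"
    using assms(1) by (simp only: prod.distrib prod_constant)
  also have "\<dots> = (-c) ^ m * ((e / c) ^ m - t)"
    by (simp only: assms(3))
  also have "\<dots> = (-1) ^ m * ((c * (e / c)) ^ m - t * c ^ m)"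
    by (simp only: power_minus[of c m] power_mult_distrib) (simp add: algebra_simps)
  also have "c * (e / c) = e" using False by simp
  finally show ?thesis .
qed

definition euler_exp :: "'a::finite itself \<Rightarrow> nat" where
  "euler_exp _ = (CARD('a) - 1) div 2"

lemma card_odd_eq_euler_exp:
  assumes "odd CARD('a::finite)"
  shows "CARD('a) = 2 * euler_exp TYPE('a) + 1"
  using assms unfolding euler_exp_def by presburger

lemma euler_exp_ge_one:
  assumes "odd CARD('a::{finite,field})"
  shows "euler_exp TYPE('a) \<ge> 1"
proof -
  have "card {0::'a, 1} \<le> CARD('a)" by (rule card_mono) auto
  then show ?thesis using card_odd_eq_euler_exp[OF assms] by simp
qed

lemma two_neq_zero_odd_field:
  assumes "odd CARD('a::{finite,field})"
  shows "(2::'a) \<noteq> 0"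
proof
  assume two: "(2::'a) = 0"
  have "(0::'a) = of_nat CARD('a)" by simp
  also have "\<dots> = 2 * of_nat (euler_exp TYPE('a)) + 1"
    by (subst card_odd_eq_euler_exp[OF assms]) simp
  finally show False using two by simp
qed

lemma four_neq_zero_odd_field:
  assumes "odd CARD('a::{finite,field})"
  shows "(4::'a) \<noteq> 0"
  using two_neq_zero_odd_field[OF assms] by (metis mult_eq_0_iff num_double numeral_times_numeral)

lemma one_neq_neg_one_odd_field:
  assumes "odd CARD('a::{finite,field})"
  shows "(1::'a) \<noteq> -1"
  using two_neq_zero_odd_field[OF assms] by (metis one_add_one add_eq_0_iff2)

lemma square_power_euler_exp:
  fixes x :: "'a::{finite,field}"
  assumes "odd CARD('a)" "x \<noteq> 0"
  shows "(x\<^sup>2) ^ euler_exp TYPE('a) = 1"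
  using power_card_minus_one_field[OF assms(2)] card_odd_eq_euler_exp[OF assms(1)]
  by (simp add: power_mult[symmetric])

lemma power_euler_exp_cases:
  fixes x :: "'a::{finite,field}"
  assumes "odd CARD('a)" "x \<noteq> 0"
  shows "x ^ euler_exp TYPE('a) = 1 \<or> x ^ euler_exp TYPE('a) = -1"
proof -
  have "(x ^ euler_exp TYPE('a))\<^sup>2 = 1"
    using square_power_euler_exp[OF assms] by (simp add: power_mult[symmetric] mult.commute)
  then show ?thesis by (simp add: power2_eq_1_iff)
qed

lemma card_nonzero_squares_ge:
  assumes "odd CARD('a::{finite,field})"
  shows "euler_exp TYPE('a) \<le> card {y::'a. y \<noteq> 0 \<and> (\<exists>b. b\<^sup>2 = y)}"
proof -
  let ?U = "UNIV - {0::'a}"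
  have "card ?U \<le> 2 * card ((\<lambda>b. b\<^sup>2) ` ?U)"
  proof (rule card_le_twice_card_image)
    fix x assume "x \<in> ?U"
    have "{y \<in> ?U. y\<^sup>2 = x\<^sup>2} \<subseteq> {x, -x}"
      by (auto simp: power2_eq_iff)
    then have "card {y \<in> ?U. y\<^sup>2 = x\<^sup>2} \<le> card {x, -x}"
      by (intro card_mono) simp_all
    also have "\<dots> \<le> 2" by (simp add: card_insert_if)
    finally show "card {y \<in> ?U. y\<^sup>2 = x\<^sup>2} \<le> 2" .
  qed simp
  moreover have "(\<lambda>b. b\<^sup>2) ` ?U = {y. y \<noteq> 0 \<and> (\<exists>b. b\<^sup>2 = y)}" by auto
  moreover have "card ?U = 2 * euler_exp TYPE('a)"
    using card_odd_eq_euler_exp[OF assms] by (simp add: card_Diff_singleton)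
  ultimately show ?thesis by simp
qed

lemma nonzero_squares_eq_euler_roots:
  assumes "odd CARD('a::{finite,field})"
  shows "{y::'a. y \<noteq> 0 \<and> (\<exists>b. b\<^sup>2 = y)} = {x. x ^ euler_exp TYPE('a) = 1}"
    and "card {x::'a. x ^ euler_exp TYPE('a) = 1} = euler_exp TYPE('a)"
proof -
  let ?S = "{y::'a. y \<noteq> 0 \<and> (\<exists>b. b\<^sup>2 = y)}" and ?R = "{x::'a. x ^ euler_exp TYPE('a) = 1}"
  have sub: "?S \<subseteq> ?R"
    using square_power_euler_exp[OF assms] by auto
  have le: "card ?R \<le> euler_exp TYPE('a)"
    by (rule card_roots_of_power_le[OF euler_exp_ge_one[OF assms]])
  have "card ?R \<le> card ?S"
    using le card_nonzero_squares_ge[OF assms] by linarith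
  then show "?S = ?R" using sub by (intro card_subset_eq) (auto dest: card_mono[rotated])
  then show "card ?R = euler_exp TYPE('a)"
    using le card_nonzero_squares_ge[OF assms] by simp
qed

lemma card_euler_roots_neg:
  assumes "odd CARD('a::{finite,field})"
  shows "card {x::'a. x ^ euler_exp TYPE('a) = -1} = euler_exp TYPE('a)"
proof -
  let ?R1 = "{x::'a. x ^ euler_exp TYPE('a) = 1}" and ?R2 = "{x::'a. x ^ euler_exp TYPE('a) = -1}"
  have "UNIV - {0} = ?R1 \<union> ?R2"
    using power_euler_exp_cases[OF assms] euler_exp_ge_one[OF assms] by (auto simp: power_0_left)
  moreover have "?R1 \<inter> ?R2 = {}" using one_neq_neg_one_odd_field[OF assms] by auto
  moreover have "card (UNIV - {0::'a}) = 2 * euler_exp TYPE('a)"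
    using card_odd_eq_euler_exp[OF assms] by (simp add: card_Diff_singleton)
  ultimately show ?thesis
    using nonzero_squares_eq_euler_roots(2)[OF assms] card_Un_disjoint[of ?R1 ?R2] by simp
qed

lemma legendre_ff_euler_criterion:
  fixes x :: "'a::{finite,field}"
  assumes "odd CARD('a)"
  shows "of_int (legendre_ff x) = x ^ euler_exp TYPE('a)"
    and "legendre_ff x = 1 \<longleftrightarrow> x ^ euler_exp TYPE('a) = 1"
    and "legendre_ff x = -1 \<longleftrightarrow> x ^ euler_exp TYPE('a) = -1"
proof -
  have square_iff: "y \<noteq> 0 \<Longrightarrow> (\<exists>b. b\<^sup>2 = y) \<longleftrightarrow> y ^ euler_exp TYPE('a) = 1" for y :: 'a
    using nonzero_squares_eq_euler_roots(1)[OF assms] by blast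
  show "of_int (legendre_ff x) = x ^ euler_exp TYPE('a)"
    and "legendre_ff x = 1 \<longleftrightarrow> x ^ euler_exp TYPE('a) = 1"
    and "legendre_ff x = -1 \<longleftrightarrow> x ^ euler_exp TYPE('a) = -1"
    using square_iff[of x] power_euler_exp_cases[OF assms, of x]
      euler_exp_ge_one[OF assms] one_neq_neg_one_odd_field[OF assms]
    unfolding legendre_ff_def by (auto simp: power_0_left)
qed

lemma power_euler_exp_times_square:
  fixes a y :: "'a::{finite,field}"
  assumes "odd CARD('a)" "a \<noteq> 0"
  shows "(a\<^sup>2 * y) ^ euler_exp TYPE('a) = y ^ euler_exp TYPE('a)"
  using square_power_euler_exp[OF assms] by (simp add: power_mult_distrib)

lemma prod_reindex_four_div:
  fixes g :: "'a::{finite,field} \<Rightarrow> 'b::comm_monoid_mult"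
  assumes "odd CARD('a)" "t \<noteq> 0"
  shows "(\<Prod>a\<in>{a. (a * (a + 4)) ^ euler_exp TYPE('a) = t}. g a)
       = (\<Prod>w\<in>{w. w ^ euler_exp TYPE('a) = t} - {1}. g (4 / (w - 1)))"
proof -
  let ?m = "euler_exp TYPE('a)"
  note four = four_neq_zero_odd_field[OF assms(1)]
  have shift: "(a * (a + 4)) ^ ?m = ((a + 4) / a) ^ ?m" if "a \<noteq> 0" for a :: 'a
  proof -
    have "a * (a + 4) = a\<^sup>2 * ((a + 4) / a)"
      using that by (simp add: field_simps power2_eq_square)
    then show ?thesis by (simp only: power_euler_exp_times_square[OF assms(1) that])
  qed
  show ?thesis
  proof (rule prod.reindex_bij_witness[of _ "\<lambda>w. 4 / (w - 1)" "\<lambda>a. (a + 4) / a"])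
    fix a assume a: "a \<in> {a. (a * (a + 4)) ^ ?m = t}"
    then have "a \<noteq> 0" using assms(2) euler_exp_ge_one[OF assms(1)] by (auto simp: power_0_left)
    then show "4 / ((a + 4) / a - 1) = a" "g (4 / ((a + 4) / a - 1)) = g a"
        and "(a + 4) / a \<in> {w. w ^ ?m = t} - {1}"
      using a four shift by (auto simp: field_simps)
  next
    fix w assume w: "w \<in> {w. w ^ ?m = t} - {1}"
    then have "w - 1 \<noteq> 0" by auto
    then have nonzero: "4 / (w - 1) \<noteq> 0" and inverse: "(4 / (w - 1) + 4) / (4 / (w - 1)) = w"
      using four by (simp_all add: field_simps)
    show "(4 / (w - 1) + 4) / (4 / (w - 1)) = w" by (rule inverse)
    show "4 / (w - 1) \<in> {a. (a * (a + 4)) ^ ?m = t}"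
      using shift[OF nonzero] w by (simp only: inverse) simp
  qed
qed

lemma prod_euler_roots_diff:
  fixes d :: "'a::{finite,field}"
  assumes "odd CARD('a)"
  shows "(\<Prod>w\<in>{w. w ^ euler_exp TYPE('a) = 1}. d - w) = d ^ euler_exp TYPE('a) - 1"
    and "(\<Prod>w\<in>{w. w ^ euler_exp TYPE('a) = -1}. d - w) = d ^ euler_exp TYPE('a) + 1"
proof -
  show "(\<Prod>w\<in>{w. w ^ euler_exp TYPE('a) = 1}. d - w) = d ^ euler_exp TYPE('a) - 1"
    by (rule prod_diff_roots_of_power[OF euler_exp_ge_one[OF assms]
          nonzero_squares_eq_euler_roots(2)[OF assms]])
  show "(\<Prod>w\<in>{w. w ^ euler_exp TYPE('a) = -1}. d - w) = d ^ euler_exp TYPE('a) + 1"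
    using prod_diff_roots_of_power[OF euler_exp_ge_one[OF assms] card_euler_roots_neg[OF assms]]
    by simp
qed

lemma wilson_odd_field:
  assumes "odd CARD('a::{finite,field})"
  shows "(\<Prod>y\<in>UNIV - {0::'a}. y) = -1"
proof -
  let ?m = "euler_exp TYPE('a)" and ?U = "UNIV - {0::'a}"
  let ?R1 = "{w::'a. w ^ ?m = 1}" and ?R2 = "{w::'a. w ^ ?m = -1}"
  have "?U = ?R1 \<union> ?R2"
    using power_euler_exp_cases[OF assms] euler_exp_ge_one[OF assms] by (auto simp: power_0_left)
  moreover have "?R1 \<inter> ?R2 = {}" using one_neq_neg_one_odd_field[OF assms] by auto
  ultimately have "(\<Prod>y\<in>?U. 0 - y) = (\<Prod>y\<in>?R1. 0 - y) * (\<Prod>y\<in>?R2. 0 - y)"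
    by (simp add: prod.union_disjoint)
  also have "\<dots> = -1"
    using prod_euler_roots_diff[OF assms, of 0] euler_exp_ge_one[OF assms] by (simp add: power_0_left)
  finally have "(\<Prod>y\<in>?U. (-1) * y) = -1" by simp
  moreover have "even (card ?U)"
    using card_odd_eq_euler_exp[OF assms] by (simp add: card_Diff_singleton)
  ultimately show ?thesis by (simp only: prod.distrib prod_constant) simp
qed

lemma prod_euler_roots_neg_sub_one:
  assumes "odd CARD('a::{finite,field})"
  shows "(\<Prod>w\<in>{w::'a. w ^ euler_exp TYPE('a) = -1}. w - 1) = (-1) ^ euler_exp TYPE('a) * 2"
  using prod_mult_diff_of_prod_diff[of _ _ "-1" 1 1, OF card_euler_roots_neg[OF assms]
      euler_exp_ge_one[OF assms]] prod_euler_roots_diff(2)[OF assms]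
  by simp

lemma prod_euler_roots_sub_one:
  assumes "odd CARD('a::{finite,field})"
  shows "(\<Prod>w\<in>{w::'a. w ^ euler_exp TYPE('a) = 1} - {1}. w - 1) = (-1) ^ euler_exp TYPE('a) / 2"
proof -
  let ?m = "euler_exp TYPE('a)" and ?U = "UNIV - {0::'a}"
  let ?R1 = "{w::'a. w ^ ?m = 1}" and ?R2 = "{w::'a. w ^ ?m = -1}"
  have "(?R1 - {1}) \<union> ?R2 = ?U - {1}"
    using power_euler_exp_cases[OF assms] euler_exp_ge_one[OF assms] one_neq_neg_one_odd_field[OF assms]
    by (auto simp: power_0_left)
  moreover have "(?R1 - {1}) \<inter> ?R2 = {}" using one_neq_neg_one_odd_field[OF assms] by auto
  ultimately have "(\<Prod>w\<in>?R1 - {1}. w - 1) * (\<Prod>w\<in>?R2. w - 1) = (\<Prod>x\<in>?U - {1}. x - 1)"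
    by (metis finite prod.union_disjoint)
  also have "\<dots> = (\<Prod>y\<in>?U - {-1}. y)"
    by (rule prod.reindex_bij_witness[of _ "\<lambda>y. y + 1" "\<lambda>x. x - 1"])
      (auto simp: algebra_simps add_eq_0_iff2)
  also have "\<dots> = 1"
    using prod.remove[of ?U "-1" "\<lambda>y. y"] wilson_odd_field[OF assms] by simp
  finally have product: "(\<Prod>w\<in>?R1 - {1}. w - 1) * ((-1) ^ ?m * 2) = 1"
    by (simp only: prod_euler_roots_neg_sub_one[OF assms])
  have halve: "x * (p * 2) = 1 \<Longrightarrow> p * p = 1 \<Longrightarrow> x = p / 2" for x p :: 'a
    using two_neq_zero_odd_field[OF assms]
    by (metis mult.commute mult.assoc divide_eq_eq_numeral1(1) mult_cancel_left2)
  show ?thesis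
    by (rule halve[OF product]) (simp add: power_mult_distrib[symmetric])
qed

lemma prod_sub_four_div_eq:
  fixes A :: "'a::field set"
  assumes "1 \<notin> A"
  shows "(\<Prod>w\<in>A. c - 4 / (w - 1)) = (\<Prod>w\<in>A. c * w - (c + 4)) / (\<Prod>w\<in>A. w - 1)"
proof -
  have "c - 4 / (w - 1) = (c * w - (c + 4)) / (w - 1)" if "w \<in> A" for w
  proof -
    have "w - 1 \<noteq> 0" using that assms by auto
    then show ?thesis by (simp add: field_simps)
  qed
  then show ?thesis by (simp add: prod_dividef)
qed

lemma prod_legendre_neg_one:
  fixes c :: "'a::{finite,field}"
  assumes "odd CARD('a)"
  shows "(\<Prod>b\<in>{b. legendre_ff (b * (b + 4)) = -1}. c - b)
       = (c ^ euler_exp TYPE('a) + (c + 4) ^ euler_exp TYPE('a)) / 2"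
proof -
  let ?m = "euler_exp TYPE('a)"
  let ?R = "{w::'a. w ^ ?m = -1}"
  have "{b. legendre_ff (b * (b + 4)) = -1} = {b::'a. (b * (b + 4)) ^ ?m = -1}"
    using legendre_ff_euler_criterion(3)[OF assms] by blast
  moreover have "?R - {1} = ?R" using one_neq_neg_one_odd_field[OF assms] by auto
  ultimately have "(\<Prod>b\<in>{b. legendre_ff (b * (b + 4)) = -1}. c - b) = (\<Prod>w\<in>?R. c - 4 / (w - 1))"
    using prod_reindex_four_div[OF assms, of "-1" "\<lambda>a. c - a"] by simp
  also have "\<dots> = (\<Prod>w\<in>?R. c * w - (c + 4)) / (\<Prod>w\<in>?R. w - 1)"
    using one_neq_neg_one_odd_field[OF assms] by (intro prod_sub_four_div_eq) simp
  also have "(\<Prod>w\<in>?R. c * w - (c + 4)) = (-1) ^ ?m * ((c + 4) ^ ?m - (-1) * c ^ ?m)"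
    by (rule prod_mult_diff_of_prod_diff[OF card_euler_roots_neg[OF assms] euler_exp_ge_one[OF assms]])
      (simp add: prod_euler_roots_diff(2)[OF assms])
  also note prod_euler_roots_neg_sub_one[OF assms]
  also have "(-1) ^ ?m * ((c + 4) ^ ?m - (-1) * c ^ ?m) / ((-1) ^ ?m * 2) = ((c + 4) ^ ?m + c ^ ?m) / 2"
    by (subst nonzero_mult_divide_mult_cancel_left) simp_all
  finally show ?thesis by (simp add: add.commute)
qed

lemma prod_legendre_one:
  fixes c :: "'a::{finite,field}"
  assumes "odd CARD('a)"
  shows "(\<Prod>a\<in>{a. legendre_ff (a * (a + 4)) = 1}. c - a)
       = (c ^ euler_exp TYPE('a) - (c + 4) ^ euler_exp TYPE('a)) / 2"
proof -
  let ?m = "euler_exp TYPE('a)"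
  let ?R = "{w::'a. w ^ ?m = 1}"
  have "{a. legendre_ff (a * (a + 4)) = 1} = {a::'a. (a * (a + 4)) ^ ?m = 1}"
    using legendre_ff_euler_criterion(2)[OF assms] by blast
  then have "(\<Prod>a\<in>{a. legendre_ff (a * (a + 4)) = 1}. c - a) = (\<Prod>w\<in>?R - {1}. c - 4 / (w - 1))"
    using prod_reindex_four_div[OF assms, of 1 "\<lambda>a. c - a"] by simp
  also have "\<dots> = (\<Prod>w\<in>?R - {1}. c * w - (c + 4)) / (\<Prod>w\<in>?R - {1}. w - 1)"
    by (intro prod_sub_four_div_eq) simp
  also have "(\<Prod>w\<in>?R - {1}. c * w - (c + 4)) = (-1) ^ ?m * ((c + 4) ^ ?m - c ^ ?m) / -4"
  proof -
    have "(\<Prod>w\<in>?R. c * w - (c + 4)) = (-1) ^ ?m * ((c + 4) ^ ?m - 1 * c ^ ?m)"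
      by (rule prod_mult_diff_of_prod_diff[OF nonzero_squares_eq_euler_roots(2)[OF assms] euler_exp_ge_one[OF assms]])
        (rule prod_euler_roots_diff(1)[OF assms])
    moreover have "(\<Prod>w\<in>?R. c * w - (c + 4)) = -4 * (\<Prod>w\<in>?R - {1}. c * w - (c + 4))"
      by (subst prod.remove[of _ 1]) simp_all
    ultimately show ?thesis
      using four_neq_zero_odd_field[OF assms] by (simp add: field_simps)
  qed
  also note prod_euler_roots_sub_one[OF assms]
  also have "(-1) ^ ?m * ((c + 4) ^ ?m - c ^ ?m) / -4 / ((-1) ^ ?m / 2) = - ((c + 4) ^ ?m - c ^ ?m) / 2"
  proof -
    have scale: "p * x / -4 / (p / 2) = - x / 2" if "p \<noteq> 0" for p x :: 'a
      using that two_neq_zero_odd_field[OF assms] four_neq_zero_odd_field[OF assms]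
      by (simp add: field_simps)
    show ?thesis by (rule scale) simp
  qed
  finally show ?thesis by (simp add: minus_diff_eq)
qed

theorem corollary7p5:
  fixes c :: "'a::{finite,field}"
  assumes "odd (card (UNIV :: 'a set))"
  shows "(\<Prod>a\<in>{a. legendre_ff (a * (a + 4)) = 1}. c - a)
         + (\<Prod>b\<in>{b. legendre_ff (b * (b + 4)) = -1}. c - b)
         = of_int (legendre_ff c)"
  unfolding prod_legendre_one[OF assms] prod_legendre_neg_one[OF assms]
    legendre_ff_euler_criterion(1)[OF assms]
  using two_neq_zero_odd_field[OF assms] by (simp add: field_simps)

end
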